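(* Let $\mathcal{C}$ be a category, $D \colon \mathcal{I} \to \mathcal{C}$ and $E \colon \mathcal{J} \to \mathcal{C}$ diagrams, $H \colon \mathcal{I}' \to \mathcal{I}$ a final functor and $K \colon \mathcal{J}' \to \mathcal{J}$ an initial functor. Then for any cocone $p \colon D \to \Delta V$ and any cone $q \colon \Delta W \to E$, we have $p \perp q$ if and only if $pH \perp qK$.
   Context: A cocone under $D$ with vertex $V$ is a natural transformation $p \colon D \to \Delta V$; a cone over $E$ with vertex $W$ is a natural transformation $q \colon \Delta W \to E$; $pH \colon DH \to \Delta V$ and $qK \colon \Delta W \to EK$ denote whiskerings. A cylinder $D \rightsquigarrow E$ is a family $r_{ij} \colon Di \to Ej$ natural in $(i,j)$; $q\cdot h$ for a cocone $h\colon D\to\Delta W$ and cone $q\colon \Delta W\to E$ is the cylinder with components $q_jh_i$. Orthogonality $p \perp q$ means: for every cocone $h \colon D \to \Delta W$ and cone $k \colon \Delta V \to E$ with $q \cdot h = k \cdot p$ as cylinders, there is a unique $j \colon V \to W$ with $j \cdot p = h$ and $q \cdot j = k$. A functor $K \colon \mathcal{J}' \to \mathcal{J}$ is initial if each comma category $K/j$ is connected (nonempty and connected); $H \colon \mathcal{I}' \to \mathcal{I}$ is final if each comma category $i/H$ is connected. *)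

theory Defs
  imports Main
begin

text \<open>Comp C g f denotes the composite g after f (defined when Cod f = Dom g).\<close>

record ('o, 'a) cat =
  Obj  :: "'o set"
  Arr  :: "'a set"
  Dom  :: "'a \<Rightarrow> 'o"
  Cod  :: "'a \<Rightarrow> 'o"
  Idn  :: "'o \<Rightarrow> 'a"
  Comp :: "'a \<Rightarrow> 'a \<Rightarrow> 'a"

definition hom :: "('o, 'a) cat \<Rightarrow> 'o \<Rightarrow> 'o \<Rightarrow> 'a set" where
  "hom C x y = {f \<in> Arr C. Dom C f = x \<and> Cod C f = y}"

definition category :: "('o, 'a) cat \<Rightarrow> bool" where
  "category C \<longleftrightarrow>
     (\<forall>f \<in> Arr C. Dom C f \<in> Obj C \<and> Cod C f \<in> Obj C) \<and>
     (\<forall>x \<in> Obj C. Idn C x \<in> hom C x x) \<and>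
     (\<forall>f \<in> Arr C. \<forall>g \<in> Arr C. Cod C f = Dom C g \<longrightarrow>
         Comp C g f \<in> hom C (Dom C f) (Cod C g)) \<and>
     (\<forall>f \<in> Arr C. Comp C f (Idn C (Dom C f)) = f \<and> Comp C (Idn C (Cod C f)) f = f) \<and>
     (\<forall>f \<in> Arr C. \<forall>g \<in> Arr C. \<forall>h \<in> Arr C. Cod C f = Dom C g \<longrightarrow> Cod C g = Dom C h \<longrightarrow>
         Comp C h (Comp C g f) = Comp C (Comp C h g) f)"

record ('o1, 'a1, 'o2, 'a2) ftor =
  fobj :: "'o1 \<Rightarrow> 'o2"
  farr :: "'a1 \<Rightarrow> 'a2"

definition is_functor :: "('o1, 'a1) cat \<Rightarrow> ('o2, 'a2) cat \<Rightarrow> ('o1, 'a1, 'o2, 'a2) ftor \<Rightarrow> bool" where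
  "is_functor A B F \<longleftrightarrow> category A \<and> category B \<and>
     (\<forall>x \<in> Obj A. fobj F x \<in> Obj B) \<and>
     (\<forall>f \<in> Arr A. farr F f \<in> hom B (fobj F (Dom A f)) (fobj F (Cod A f))) \<and>
     (\<forall>x \<in> Obj A. farr F (Idn A x) = Idn B (fobj F x)) \<and>
     (\<forall>f \<in> Arr A. \<forall>g \<in> Arr A. Cod A f = Dom A g \<longrightarrow>
         farr F (Comp A g f) = Comp B (farr F g) (farr F f))"

definition fcomp :: "('o2, 'a2, 'o3, 'a3) ftor \<Rightarrow> ('o1, 'a1, 'o2, 'a2) ftor \<Rightarrow> ('o1, 'a1, 'o3, 'a3) ftor" where
  "fcomp G F = \<lparr>fobj = fobj G \<circ> fobj F, farr = farr G \<circ> farr F\<rparr>"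

definition cocone :: "('o, 'a) cat \<Rightarrow> ('io, 'ia) cat \<Rightarrow> ('io, 'ia, 'o, 'a) ftor \<Rightarrow> 'o \<Rightarrow> ('io \<Rightarrow> 'a) \<Rightarrow> bool" where
  "cocone C I D V p \<longleftrightarrow> V \<in> Obj C \<and>
     (\<forall>i \<in> Obj I. p i \<in> hom C (fobj D i) V) \<and>
     (\<forall>u \<in> Arr I. Comp C (p (Cod I u)) (farr D u) = p (Dom I u))"

definition cone :: "('o, 'a) cat \<Rightarrow> ('jo, 'ja) cat \<Rightarrow> ('jo, 'ja, 'o, 'a) ftor \<Rightarrow> 'o \<Rightarrow> ('jo \<Rightarrow> 'a) \<Rightarrow> bool" where
  "cone C J E W q \<longleftrightarrow> W \<in> Obj C \<and>
     (\<forall>j \<in> Obj J. q j \<in> hom C W (fobj E j)) \<and>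
     (\<forall>v \<in> Arr J. Comp C (farr E v) (q (Dom J v)) = q (Cod J v))"

text \<open>Equality of the cylinders q\<cdot>h and k\<cdot>p means componentwise equality q_j h_i = k_j p_i.\<close>
definition orthogonal ::
  "('o, 'a) cat \<Rightarrow> ('io, 'ia) cat \<Rightarrow> ('jo, 'ja) cat \<Rightarrow>
   ('io, 'ia, 'o, 'a) ftor \<Rightarrow> ('jo, 'ja, 'o, 'a) ftor \<Rightarrow>
   'o \<Rightarrow> ('io \<Rightarrow> 'a) \<Rightarrow> 'o \<Rightarrow> ('jo \<Rightarrow> 'a) \<Rightarrow> bool" where
  "orthogonal C I J D E V p W q \<longleftrightarrow>
     (\<forall>h k. cocone C I D W h \<longrightarrow> cone C J E V k \<longrightarrow>
        (\<forall>i \<in> Obj I. \<forall>j \<in> Obj J. Comp C (q j) (h i) = Comp C (k j) (p i)) \<longrightarrow>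
        (\<exists>!t. t \<in> hom C V W \<and>
              (\<forall>i \<in> Obj I. Comp C t (p i) = h i) \<and>
              (\<forall>j \<in> Obj J. Comp C (q j) t = k j)))"

text \<open>Connectedness of a comma category given by its object set X and the relation
  R of pairs of objects joined by a morphism: nonempty, and any two objects are joined
  by a zigzag.\<close>
definition connected_rel :: "'x set \<Rightarrow> ('x \<times> 'x) set \<Rightarrow> bool" where
  "connected_rel X R \<longleftrightarrow> X \<noteq> {} \<and>
     (\<forall>x \<in> X. \<forall>y \<in> X. (x, y) \<in> ((R \<inter> (X \<times> X)) \<union> (R \<inter> (X \<times> X))\<inverse>)\<^sup>*)"

text \<open>Comma category i/H for H : I' \<rightarrow> I: objects (i', u) with u : i \<rightarrow> H i';
  a morphism (i', u) \<rightarrow> (i'', u') is f : i' \<rightarrow> i'' with H f \<circ> u = u'.\<close>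
definition under_obj :: "('io, 'ia) cat \<Rightarrow> ('jo, 'ja) cat \<Rightarrow> ('jo, 'ja, 'io, 'ia) ftor \<Rightarrow> 'io \<Rightarrow> ('jo \<times> 'ia) set" where
  "under_obj I I' H i = {(i', u). i' \<in> Obj I' \<and> u \<in> hom I i (fobj H i')}"

definition under_rel :: "('io, 'ia) cat \<Rightarrow> ('jo, 'ja) cat \<Rightarrow> ('jo, 'ja, 'io, 'ia) ftor \<Rightarrow> 'io \<Rightarrow> (('jo \<times> 'ia) \<times> ('jo \<times> 'ia)) set" where
  "under_rel I I' H i = {((i', u), (i'', u')). \<exists>f \<in> hom I' i' i''. Comp I (farr H f) u = u'}"

definition final_functor :: "('jo, 'ja) cat \<Rightarrow> ('io, 'ia) cat \<Rightarrow> ('jo, 'ja, 'io, 'ia) ftor \<Rightarrow> bool" where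
  "final_functor I' I H \<longleftrightarrow> is_functor I' I H \<and>
     (\<forall>i \<in> Obj I. connected_rel (under_obj I I' H i) (under_rel I I' H i))"

text \<open>Comma category K/j for K : J' \<rightarrow> J: objects (j', v) with v : K j' \<rightarrow> j;
  a morphism (j', v) \<rightarrow> (j'', v') is f : j' \<rightarrow> j'' with v' \<circ> K f = v.\<close>
definition over_obj :: "('io, 'ia) cat \<Rightarrow> ('jo, 'ja) cat \<Rightarrow> ('jo, 'ja, 'io, 'ia) ftor \<Rightarrow> 'io \<Rightarrow> ('jo \<times> 'ia) set" where
  "over_obj J J' K j = {(j', v). j' \<in> Obj J' \<and> v \<in> hom J (fobj K j') j}"

definition over_rel :: "('io, 'ia) cat \<Rightarrow> ('jo, 'ja) cat \<Rightarrow> ('jo, 'ja, 'io, 'ia) ftor \<Rightarrow> 'io \<Rightarrow> (('jo \<times> 'ia) \<times> ('jo \<times> 'ia)) set" where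
  "over_rel J J' K j = {((j', v), (j'', v')). \<exists>f \<in> hom J' j' j''. Comp J v' (farr K f) = v}"

definition initial_functor :: "('jo, 'ja) cat \<Rightarrow> ('io, 'ia) cat \<Rightarrow> ('jo, 'ja, 'io, 'ia) ftor \<Rightarrow> bool" where
  "initial_functor J' J K \<longleftrightarrow> is_functor J' J K \<and>
     (\<forall>j \<in> Obj J. connected_rel (over_obj J J' K j) (over_rel J J' K j))"

end

theory Submission
  imports Defs
begin

text \<open>Precomposing with a final functor H induces a bijection between cocones under D
  and cocones under DH: a cocone g under DH extends by h i = g i' \<circ> D u for any
  u : i \<rightarrow> H i', which is well defined because i/H is connected, and two cocones under D
  agreeing on the image of H agree everywhere because i/H is nonempty. Both the
  commutative squares q \<cdot> h = k \<cdot> p and the equations t \<cdot> p = h are conditions on cocones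
  under D, so they are unaffected by restricting along H; hence p \<perp> q iff pH \<perp> q.
  The statement for cones along an initial functor K is the dual one, obtained by passing
  to opposite categories, where p \<perp> q becomes q \<perp> p.\<close>

lemma arr_in_hom: "f \<in> Arr C \<Longrightarrow> f \<in> hom C (Dom C f) (Cod C f)"
  unfolding hom_def by auto

lemma comp_in_hom:
  "category C \<Longrightarrow> f \<in> hom C a b \<Longrightarrow> g \<in> hom C b c \<Longrightarrow> Comp C g f \<in> hom C a c"
  unfolding category_def hom_def by auto

lemma comp_assoc:
  "category C \<Longrightarrow> f \<in> hom C a b \<Longrightarrow> g \<in> hom C b c \<Longrightarrow> h \<in> hom C c d \<Longrightarrow>
   Comp C h (Comp C g f) = Comp C (Comp C h g) f"
  unfolding category_def hom_def by auto

lemma comp_id_right: "category C \<Longrightarrow> f \<in> hom C a b \<Longrightarrow> Comp C f (Idn C a) = f"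
  unfolding category_def hom_def by auto

lemma id_in_hom: "category C \<Longrightarrow> a \<in> Obj C \<Longrightarrow> Idn C a \<in> hom C a a"
  unfolding category_def by auto

lemma hom_obj_cod: "category C \<Longrightarrow> f \<in> hom C a b \<Longrightarrow> b \<in> Obj C"
  unfolding category_def hom_def by auto

lemma functor_category_dom: "is_functor A B F \<Longrightarrow> category A"
  and functor_category_cod: "is_functor A B F \<Longrightarrow> category B"
  unfolding is_functor_def by auto

lemma functor_obj: "is_functor A B F \<Longrightarrow> x \<in> Obj A \<Longrightarrow> fobj F x \<in> Obj B"
  unfolding is_functor_def by auto

lemma functor_hom:
  "is_functor A B F \<Longrightarrow> f \<in> hom A x y \<Longrightarrow> farr F f \<in> hom B (fobj F x) (fobj F y)"
  unfolding is_functor_def hom_def by auto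

lemma functor_comp:
  "is_functor A B F \<Longrightarrow> f \<in> hom A x y \<Longrightarrow> g \<in> hom A y z \<Longrightarrow>
   farr F (Comp A g f) = Comp B (farr F g) (farr F f)"
  unfolding is_functor_def hom_def by auto

lemma functor_id: "is_functor A B F \<Longrightarrow> x \<in> Obj A \<Longrightarrow> farr F (Idn A x) = Idn B (fobj F x)"
  unfolding is_functor_def by auto

lemma final_functor_functor: "final_functor I' I H \<Longrightarrow> is_functor I' I H"
  unfolding final_functor_def by auto

lemma final_functor_under_ne:
  assumes "final_functor I' I H" "i \<in> Obj I"
  obtains i' u where "i' \<in> Obj I'" "u \<in> hom I i (fobj H i')"
  using assms unfolding final_functor_def connected_rel_def under_obj_def by fastforce

lemma connected_rel_const:
  assumes "connected_rel X R"
    and "\<And>x y. x \<in> X \<Longrightarrow> y \<in> X \<Longrightarrow> (x, y) \<in> R \<Longrightarrow> \<phi> x = \<phi> y"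
    and "x \<in> X" "y \<in> X"
  shows "\<phi> x = \<phi> y"
proof -
  have "(x, y) \<in> ((R \<inter> (X \<times> X)) \<union> (R \<inter> (X \<times> X))\<inverse>)\<^sup>*"
    using assms(1,3,4) unfolding connected_rel_def by auto
  then show ?thesis
    by (induction rule: rtrancl_induct) (use assms(2) in auto)
qed

lemma connected_rel_converse: "connected_rel X (R\<inverse>) \<longleftrightarrow> connected_rel X R"
proof -
  have "(R\<inverse> \<inter> (X \<times> X)) \<union> (R\<inverse> \<inter> (X \<times> X))\<inverse> = (R \<inter> (X \<times> X)) \<union> (R \<inter> (X \<times> X))\<inverse>"
    by auto
  then show ?thesis
    unfolding connected_rel_def by simp
qed

lemma cocone_hom: "cocone C I D V p \<Longrightarrow> i \<in> Obj I \<Longrightarrow> p i \<in> hom C (fobj D i) V"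
  unfolding cocone_def by auto

lemma cocone_nat: "cocone C I D V p \<Longrightarrow> u \<in> hom I i j \<Longrightarrow> Comp C (p j) (farr D u) = p i"
  unfolding cocone_def hom_def by auto

lemma cone_hom: "cone C J E W q \<Longrightarrow> j \<in> Obj J \<Longrightarrow> q j \<in> hom C W (fobj E j)"
  unfolding cone_def by auto

lemma cocone_comp:
  assumes D: "is_functor I C D" and a: "cocone C I D X a" and t: "t \<in> hom C X Y"
  shows "cocone C I D Y (\<lambda>i. Comp C t (a i))"
  unfolding cocone_def
proof (intro conjI ballI)
  have C: "category C" using D by (rule functor_category_cod)
  show "Y \<in> Obj C" using hom_obj_cod[OF C t] .
  show "Comp C t (a i) \<in> hom C (fobj D i) Y" if "i \<in> Obj I" for i
    using comp_in_hom[OF C cocone_hom[OF a that] t] .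
  show "Comp C (Comp C t (a (Cod I u))) (farr D u) = Comp C t (a (Dom I u))" if "u \<in> Arr I" for u
  proof -
    have u: "u \<in> hom I (Dom I u) (Cod I u)" using arr_in_hom[OF that] .
    have "Cod I u \<in> Obj I" using functor_category_dom[OF D] that unfolding category_def by auto
    then show ?thesis
      using comp_assoc[OF C functor_hom[OF D u] cocone_hom[OF a] t] cocone_nat[OF a u] by simp
  qed
qed

lemma cocone_restrict:
  assumes "is_functor I' I H" "cocone C I D V p"
  shows "cocone C I' (fcomp D H) V (\<lambda>i'. p (fobj H i'))"
  using assms functor_hom[OF assms(1) arr_in_hom] cocone_nat[OF assms(2)]
  unfolding cocone_def fcomp_def is_functor_def by auto

lemma cocone_eq_iff_on_final:
  assumes H: "final_functor I' I H"
    and a: "cocone C I D X a" and b: "cocone C I D X b"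
  shows "(\<forall>i\<in>Obj I. a i = b i) \<longleftrightarrow> (\<forall>i'\<in>Obj I'. a (fobj H i') = b (fobj H i'))"
proof (intro iffI ballI)
  fix i assume eq: "\<forall>i'\<in>Obj I'. a (fobj H i') = b (fobj H i')" and i: "i \<in> Obj I"
  obtain i' u where "i' \<in> Obj I'" "u \<in> hom I i (fobj H i')"
    using final_functor_under_ne[OF H i] .
  then show "a i = b i"
    using cocone_nat[OF a] cocone_nat[OF b] eq by metis
qed (use functor_obj[OF final_functor_functor[OF H]] in auto)

lemma cocone_extend_along_final:
  assumes H: "final_functor I' I H" and D: "is_functor I C D"
    and g: "cocone C I' (fcomp D H) W g"
  obtains h where "cocone C I D W h" and "\<forall>i'\<in>Obj I'. h (fobj H i') = g i'"
proof -
  have FH: "is_functor I' I H" using H by (rule final_functor_functor)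
  have C: "category C" and I: "category I"
    using D by (rule functor_category_cod, rule functor_category_dom)
  have g_hom: "g i' \<in> hom C (fobj D (fobj H i')) W" if "i' \<in> Obj I'" for i'
    using cocone_hom[OF g that] by (simp add: fcomp_def)
  have g_nat: "Comp C (g b) (farr D (farr H f)) = g a" if "f \<in> hom I' a b" for f a b
    using cocone_nat[OF g that] by (simp add: fcomp_def)
  define \<phi> where "\<phi> = (\<lambda>(i', u). Comp C (g i') (farr D u))"
  have \<phi>_const: "\<phi> x = \<phi> y"
    if "i \<in> Obj I" "x \<in> under_obj I I' H i" "y \<in> under_obj I I' H i" for i x y
  proof (rule connected_rel_const[where R = "under_rel I I' H i"])
    show "connected_rel (under_obj I I' H i) (under_rel I I' H i)"
      using H that(1) unfolding final_functor_def by auto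
  next
    fix x y
    assume "x \<in> under_obj I I' H i" "y \<in> under_obj I I' H i" "(x, y) \<in> under_rel I I' H i"
    then obtain i1 u1 i2 f where x: "x = (i1, u1)" and y: "y = (i2, Comp I (farr H f) u1)"
      and u1: "u1 \<in> hom I i (fobj H i1)" and f: "f \<in> hom I' i1 i2" and i2: "i2 \<in> Obj I'"
      unfolding under_obj_def under_rel_def by auto
    have Hf: "farr H f \<in> hom I (fobj H i1) (fobj H i2)" using functor_hom[OF FH f] .
    have "\<phi> y = Comp C (g i2) (Comp C (farr D (farr H f)) (farr D u1))"
      using functor_comp[OF D u1 Hf] by (simp add: y \<phi>_def)
    also have "\<dots> = Comp C (Comp C (g i2) (farr D (farr H f))) (farr D u1)"
      using comp_assoc[OF C functor_hom[OF D u1] functor_hom[OF D Hf] g_hom[OF i2]] .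
    also have "\<dots> = \<phi> x" using g_nat[OF f] by (simp add: x \<phi>_def)
    finally show "\<phi> x = \<phi> y" by simp
  qed (use that in auto)
  define h where "h i = \<phi> (SOME x. x \<in> under_obj I I' H i)" for i
  have h_eq: "h i = Comp C (g i') (farr D u)"
    if "i' \<in> Obj I'" "u \<in> hom I i (fobj H i')" for i i' u
  proof -
    have iu: "(i', u) \<in> under_obj I I' H i" using that unfolding under_obj_def by auto
    have i: "i \<in> Obj I" using that(2) I unfolding category_def hom_def by auto
    show ?thesis
      unfolding h_def using \<phi>_const[OF i someI[of _ "(i', u)"] iu] iu by (simp add: \<phi>_def)
  qed
  have "cocone C I D W h"
    unfolding cocone_def
  proof (intro conjI ballI)
    show "W \<in> Obj C" using g unfolding cocone_def by auto
  next
    fix i assume "i \<in> Obj I"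
    then obtain i' u where iu: "i' \<in> Obj I'" "u \<in> hom I i (fobj H i')"
      using final_functor_under_ne[OF H] by blast
    show "h i \<in> hom C (fobj D i) W"
      using comp_in_hom[OF C functor_hom[OF D iu(2)] g_hom[OF iu(1)]] h_eq[OF iu] by simp
  next
    fix a assume "a \<in> Arr I"
    then have a: "a \<in> hom I (Dom I a) (Cod I a)" and "Cod I a \<in> Obj I"
      using I unfolding category_def hom_def by auto
    then obtain i' u where iu: "i' \<in> Obj I'" "u \<in> hom I (Cod I a) (fobj H i')"
      using final_functor_under_ne[OF H] by blast
    have "Comp C (h (Cod I a)) (farr D a) = Comp C (g i') (Comp C (farr D u) (farr D a))"
      using comp_assoc[OF C functor_hom[OF D a] functor_hom[OF D iu(2)] g_hom[OF iu(1)]]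
        h_eq[OF iu] by simp
    also have "\<dots> = h (Dom I a)"
      using functor_comp[OF D a iu(2)] h_eq[OF iu(1) comp_in_hom[OF I a iu(2)]] by simp
    finally show "Comp C (h (Cod I a)) (farr D a) = h (Dom I a)" .
  qed
  moreover have "h (fobj H i') = g i'" if i': "i' \<in> Obj I'" for i'
  proof -
    have Hi: "fobj H i' \<in> Obj I" using functor_obj[OF FH i'] .
    show ?thesis
      using h_eq[OF i' id_in_hom[OF I Hi]] functor_id[OF D Hi] comp_id_right[OF C g_hom[OF i']]
      by simp
  qed
  ultimately show ?thesis using that by blast
qed

definition unique_diagonal ::
  "('o, 'a) cat \<Rightarrow> ('io, 'ia) cat \<Rightarrow> ('jo, 'ja) cat \<Rightarrow>
   'o \<Rightarrow> ('io \<Rightarrow> 'a) \<Rightarrow> 'o \<Rightarrow> ('jo \<Rightarrow> 'a) \<Rightarrow> ('io \<Rightarrow> 'a) \<Rightarrow> ('jo \<Rightarrow> 'a) \<Rightarrow> bool" where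
  "unique_diagonal C I J V p W q h k \<longleftrightarrow>
     (\<forall>i \<in> Obj I. \<forall>j \<in> Obj J. Comp C (q j) (h i) = Comp C (k j) (p i)) \<longrightarrow>
     (\<exists>!t. t \<in> hom C V W \<and> (\<forall>i \<in> Obj I. Comp C t (p i) = h i) \<and> (\<forall>j \<in> Obj J. Comp C (q j) t = k j))"

lemma orthogonal_iff_unique_diagonal:
  "orthogonal C I J D E V p W q \<longleftrightarrow>
   (\<forall>h k. cocone C I D W h \<longrightarrow> cone C J E V k \<longrightarrow> unique_diagonal C I J V p W q h k)"
  unfolding orthogonal_def unique_diagonal_def ..

lemma unique_diagonal_restrict_final:
  assumes H: "final_functor I' I H" and D: "is_functor I C D"
    and p: "cocone C I D V p" and h: "cocone C I D W h"
    and q: "cone C J E W q" and k: "cone C J E V k"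
  shows "unique_diagonal C I J V p W q h k \<longleftrightarrow>
         unique_diagonal C I' J V (\<lambda>i'. p (fobj H i')) W q (\<lambda>i'. h (fobj H i')) k"
proof -
  have square: "(\<forall>i \<in> Obj I. Comp C (q j) (h i) = Comp C (k j) (p i)) \<longleftrightarrow>
      (\<forall>i' \<in> Obj I'. Comp C (q j) (h (fobj H i')) = Comp C (k j) (p (fobj H i')))"
    if "j \<in> Obj J" for j
    using cocone_eq_iff_on_final[OF H cocone_comp[OF D h cone_hom[OF q that]]
        cocone_comp[OF D p cone_hom[OF k that]]] .
  have triangle: "(\<forall>i \<in> Obj I. Comp C t (p i) = h i) \<longleftrightarrow>
      (\<forall>i' \<in> Obj I'. Comp C t (p (fobj H i')) = h (fobj H i'))"
    if "t \<in> hom C V W" for t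
    using cocone_eq_iff_on_final[OF H cocone_comp[OF D p that] h] .
  have "(t \<in> hom C V W \<and> (\<forall>i \<in> Obj I. Comp C t (p i) = h i) \<and> (\<forall>j \<in> Obj J. Comp C (q j) t = k j))
    \<longleftrightarrow> (t \<in> hom C V W \<and> (\<forall>i' \<in> Obj I'. Comp C t (p (fobj H i')) = h (fobj H i')) \<and>
          (\<forall>j \<in> Obj J. Comp C (q j) t = k j))" for t
    by (simp add: triangle cong: conj_cong)
  moreover have "(\<forall>i \<in> Obj I. \<forall>j \<in> Obj J. Comp C (q j) (h i) = Comp C (k j) (p i)) \<longleftrightarrow>
      (\<forall>i' \<in> Obj I'. \<forall>j \<in> Obj J. Comp C (q j) (h (fobj H i')) = Comp C (k j) (p (fobj H i')))"
    using square by (metis (no_types, lifting))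
  ultimately show ?thesis
    unfolding unique_diagonal_def by presburger
qed

lemma orthogonal_restrict_final:
  assumes H: "final_functor I' I H" and D: "is_functor I C D"
    and p: "cocone C I D V p" and q: "cone C J E W q"
  shows "orthogonal C I J D E V p W q \<longleftrightarrow>
         orthogonal C I' J (fcomp D H) E V (\<lambda>i'. p (fobj H i')) W q"
  unfolding orthogonal_iff_unique_diagonal
proof (intro iffI allI impI)
  fix g k
  assume pq: "\<forall>h k. cocone C I D W h \<longrightarrow> cone C J E V k \<longrightarrow> unique_diagonal C I J V p W q h k"
    and g: "cocone C I' (fcomp D H) W g" and k: "cone C J E V k"
  obtain h where h: "cocone C I D W h" and hg: "\<forall>i'\<in>Obj I'. h (fobj H i') = g i'"
    using cocone_extend_along_final[OF H D g] .
  have "unique_diagonal C I' J V (\<lambda>i'. p (fobj H i')) W q (\<lambda>i'. h (fobj H i')) k"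
    using pq h k unique_diagonal_restrict_final[OF H D p h q k] by simp
  then show "unique_diagonal C I' J V (\<lambda>i'. p (fobj H i')) W q g k"
    using hg unfolding unique_diagonal_def by simp
next
  fix h k
  assume "\<forall>g k. cocone C I' (fcomp D H) W g \<longrightarrow> cone C J E V k \<longrightarrow>
      unique_diagonal C I' J V (\<lambda>i'. p (fobj H i')) W q g k"
    and h: "cocone C I D W h" and k: "cone C J E V k"
  then show "unique_diagonal C I J V p W q h k"
    using unique_diagonal_restrict_final[OF H D p h q k]
      cocone_restrict[OF final_functor_functor[OF H] h] by simp
qed

definition op_cat :: "('o, 'a) cat \<Rightarrow> ('o, 'a) cat" where
  "op_cat C = C\<lparr>Dom := Cod C, Cod := Dom C, Comp := (\<lambda>g f. Comp C f g)\<rparr>"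

lemma op_cat_simps [simp]:
  "Obj (op_cat C) = Obj C" "Arr (op_cat C) = Arr C" "Dom (op_cat C) = Cod C"
  "Cod (op_cat C) = Dom C" "Idn (op_cat C) = Idn C" "Comp (op_cat C) g f = Comp C f g"
  unfolding op_cat_def by simp_all

lemma hom_op_cat [simp]: "hom (op_cat C) x y = hom C y x"
  unfolding hom_def by auto

lemma category_op_cat: "category C \<Longrightarrow> category (op_cat C)"
  unfolding category_def hom_def by auto

lemma is_functor_op_cat: "is_functor A B F \<Longrightarrow> is_functor (op_cat A) (op_cat B) F"
  unfolding is_functor_def using category_op_cat[of A] category_op_cat[of B]
  by (auto simp: hom_def)

lemma cocone_op_cat [simp]: "cocone (op_cat C) (op_cat J) E W q \<longleftrightarrow> cone C J E W q"
  unfolding cocone_def cone_def by auto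

lemma cone_op_cat [simp]: "cone (op_cat C) (op_cat I) D V p \<longleftrightarrow> cocone C I D V p"
  unfolding cocone_def cone_def by auto

lemma unique_diagonal_op_cat:
  "unique_diagonal (op_cat C) (op_cat J) (op_cat I) W q V p k h \<longleftrightarrow>
   unique_diagonal C I J V p W q h k"
proof -
  have "(\<forall>j \<in> Obj J. \<forall>i \<in> Obj I. Comp C (k j) (p i) = Comp C (q j) (h i)) \<longleftrightarrow>
        (\<forall>i \<in> Obj I. \<forall>j \<in> Obj J. Comp C (q j) (h i) = Comp C (k j) (p i))"
    by fastforce
  moreover have
    "(t \<in> hom C V W \<and> (\<forall>j \<in> Obj J. Comp C (q j) t = k j) \<and> (\<forall>i \<in> Obj I. Comp C t (p i) = h i))
     \<longleftrightarrow> (t \<in> hom C V W \<and> (\<forall>i \<in> Obj I. Comp C t (p i) = h i) \<and> (\<forall>j \<in> Obj J. Comp C (q j) t = k j))"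
    for t
    by blast
  ultimately show ?thesis
    unfolding unique_diagonal_def by simp
qed

lemma orthogonal_op_cat:
  "orthogonal (op_cat C) (op_cat J) (op_cat I) E D W q V p \<longleftrightarrow> orthogonal C I J D E V p W q"
  unfolding orthogonal_iff_unique_diagonal unique_diagonal_op_cat by auto

lemma final_op_cat_if_initial:
  assumes "initial_functor J' J K"
  shows "final_functor (op_cat J') (op_cat J) K"
proof -
  have "under_obj (op_cat J) (op_cat J') K j = over_obj J J' K j"
    and "under_rel (op_cat J) (op_cat J') K j = (over_rel J J' K j)\<inverse>" for j
    unfolding under_obj_def over_obj_def under_rel_def over_rel_def by auto
  then show ?thesis
    using assms is_functor_op_cat[of J' J K]
    unfolding initial_functor_def final_functor_def by (simp add: connected_rel_converse)
qed

theorem lemma2p7: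
  fixes C :: "('o, 'a) cat"
    and I :: "('io, 'ia) cat" and J :: "('jo, 'ja) cat"
    and I' :: "('io2, 'ia2) cat" and J' :: "('jo2, 'ja2) cat"
    and D :: "('io, 'ia, 'o, 'a) ftor" and E :: "('jo, 'ja, 'o, 'a) ftor"
    and H :: "('io2, 'ia2, 'io, 'ia) ftor" and K :: "('jo2, 'ja2, 'jo, 'ja) ftor"
    and V W :: 'o and p :: "'io \<Rightarrow> 'a" and q :: "'jo \<Rightarrow> 'a"
  assumes "category C"
    and "is_functor I C D" and "is_functor J C E"
    and "final_functor I' I H" and "initial_functor J' J K"
    and "cocone C I D V p" and "cone C J E W q"
  shows "orthogonal C I J D E V p W q \<longleftrightarrow>
         orthogonal C I' J' (fcomp D H) (fcomp E K) V (\<lambda>i'. p (fobj H i')) W (\<lambda>j'. q (fobj K j'))"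
proof -
  let ?pH = "\<lambda>i'. p (fobj H i')" and ?qK = "\<lambda>j'. q (fobj K j')"
  have pH: "cocone C I' (fcomp D H) V ?pH"
    using cocone_restrict[OF final_functor_functor] assms(4,6) .
  have "orthogonal C I J D E V p W q \<longleftrightarrow> orthogonal C I' J (fcomp D H) E V ?pH W q"
    using orthogonal_restrict_final assms(4,2,6,7) .
  also have "\<dots> \<longleftrightarrow> orthogonal (op_cat C) (op_cat J) (op_cat I') E (fcomp D H) W q V ?pH"
    by (rule orthogonal_op_cat[symmetric])
  also have "\<dots> \<longleftrightarrow> orthogonal (op_cat C) (op_cat J') (op_cat I') (fcomp E K) (fcomp D H) W ?qK V ?pH"
    by (rule orthogonal_restrict_final[OF final_op_cat_if_initial[OF assms(5)]
        is_functor_op_cat[OF assms(3)]]) (simp_all add: assms(7) pH)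
  also have "\<dots> \<longleftrightarrow> orthogonal C I' J' (fcomp D H) (fcomp E K) V ?pH W ?qK"
    by (rule orthogonal_op_cat)
  finally show ?thesis .
qed

end
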